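(* Let $n$ and $m$ be integers with $n\ge 1$ and $0\le m\le n$, and let $\theta>0$ be real. Then $$T'_{n+1,m+1}(\theta)=\frac{\theta^{m}}{(\theta+1)_n}\,\frac{1}{2\pi i}\int_{\mathcal C_R}\frac{(z+1)_n}{z^{m}}\,\frac{dz}{\theta-z},$$ for every $R$ with $0<R<\theta$, where $\mathcal C_R$ is the circle $|z|=R$ in the complex plane, traversed once counterclockwise.
   Context: For a complex number $\alpha$ and an integer $n\ge0$, the Pochhammer symbol is $(\alpha)_0=1$, $(\alpha)_n=\alpha(\alpha+1)\cdots(\alpha+n-1)$. The Stirling numbers of the first kind $S_n^{(k)}$ ($0\le k\le n$) are defined by the polynomial identity $(\theta)_n=\sum_{k=0}^n(-1)^{n-k}S_n^{(k)}\theta^k$. For integers $0\le m\le n$ and real $\theta>0$, define $$S'_{n,m}(\theta)=\frac{1}{(\theta)_n}\sum_{k=m}^n(-1)^{n-k}S_n^{(k)}\theta^k,\qquad T'_{n,m}(\theta)=1-S'_{n,m}(\theta)=\frac{1}{(\theta)_n}\sum_{k=0}^{m-1}(-1)^{n-k}S_n^{(k)}\theta^k .$$ *)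

theory Defs
  imports "HOL-Complex_Analysis.Complex_Analysis" "HOL-Combinatorics.Stirling"
begin

text \<open>Signed Stirling numbers of the first kind S_n^(k), characterised by
  (theta)_n = sum_k (-1)^(n-k) S_n^(k) theta^k; the library's stirling n k is the
  unsigned version, so S_n^(k) = (-1)^(n-k) * stirling n k.\<close>
definition stirling1_signed :: "nat \<Rightarrow> nat \<Rightarrow> real" where
  "stirling1_signed n k = (-1) ^ (n - k) * real (stirling n k)"

definition S' :: "nat \<Rightarrow> nat \<Rightarrow> real \<Rightarrow> real" where
  "S' n m \<theta> = (1 / pochhammer \<theta> n) *
     (\<Sum>k=m..n. (-1) ^ (n - k) * stirling1_signed n k * \<theta> ^ k)"

definition T' :: "nat \<Rightarrow> nat \<Rightarrow> real \<Rightarrow> real" where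
  "T' n m \<theta> = (1 / pochhammer \<theta> n) *
     (\<Sum>k=0..<m. (-1) ^ (n - k) * stirling1_signed n k * \<theta> ^ k)"

end

theory Submission
  imports Defs
begin

text \<open>Write \<open>(z + 1)_n = \<Sum>_j c_j z^j\<close> with \<open>c_j = stirling (n + 1) (j + 1)\<close>. On the circle
  \<open>|z| = R < \<theta>\<close> the partial fraction expansion
  \<open>\<theta>^m / (z^m (\<theta> - z)) = 1 / (\<theta> - z) + \<Sum>_{i<m} \<theta>^i / z^(i+1)\<close> splits the integrand into a
  part holomorphic on the disc, which integrates to zero, and terms whose integrals pick out the
  coefficients \<open>2 \<pi> i c_i\<close>. So the right-hand side equals \<open>\<Sum>_{i<m} c_i \<theta>^i / (\<theta> + 1)_n\<close>, and
  this is \<open>T'_{n+1,m+1}(\<theta>)\<close> because \<open>stirling (n + 1) 0 = 0\<close> and \<open>(\<theta>)_{n+1} = \<theta> (\<theta> + 1)_n\<close>.\<close>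

lemma has_contour_integral_power_div_power_circlepath:
  assumes "0 < R"
  shows "((\<lambda>z::complex. z ^ j / z ^ Suc i) has_contour_integral
           (if j = i then 2 * pi * \<i> else 0)) (circlepath 0 R)"
proof -
  have "((\<lambda>z. (z - 0) ^ j / (z - 0) ^ Suc i) has_contour_integral
           2 * pi * \<i> / fact i * (deriv ^^ i) (\<lambda>z. (z - 0) ^ j) 0) (circlepath 0 R)"
    by (rule Cauchy_has_contour_integral_higher_derivative_circlepath)
       (use assms in \<open>auto intro!: continuous_intros holomorphic_intros\<close>)
  also have "(deriv ^^ i) (\<lambda>z. (z - 0) ^ j) 0 =
               pochhammer (of_nat (Suc j - i)) i * (0 - 0) ^ (j - i)"
    by (rule higher_deriv_power)
  also have "\<dots> = (if j = i then fact i else 0 :: complex)"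
    by (cases j i rule: linorder_cases) (auto simp: pochhammer_fact pochhammer_0_left)
  finally have "((\<lambda>z. z ^ j / z ^ Suc i) has_contour_integral
                  2 * pi * \<i> / fact i * (if j = i then fact i else 0)) (circlepath 0 R)"
    by (simp only: diff_zero)
  moreover have "2 * pi * \<i> / fact i * (if j = i then fact i else 0) =
                   (if j = i then 2 * pi * \<i> else 0)"
    by simp
  ultimately show ?thesis by (simp only:)
qed

lemma divide_power_mult_diff_eq:
  fixes t z :: "'a::field"
  assumes "z \<noteq> 0" "t \<noteq> z"
  shows "t ^ m / (z ^ m * (t - z)) = 1 / (t - z) + (\<Sum>i<m. t ^ i / z ^ Suc i)"
proof (induction m)
  case (Suc m)
  have "t ^ Suc m / (z ^ Suc m * (t - z)) = t ^ m / (z ^ m * (t - z)) + t ^ m / z ^ Suc m"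
    using assms by (simp add: field_simps)
  then show ?case by (simp add: Suc.IH)
qed simp

lemma pochhammer_plus_1_eq_sum_stirling:
  fixes z :: "'a::idom"
  shows "pochhammer (z + 1) n = (\<Sum>j\<le>n. of_nat (stirling (Suc n) (Suc j)) * z ^ j)"
proof (cases "z = 0")
  case True
  have "(\<Sum>j\<le>n. of_nat (stirling (Suc n) (Suc j)) * (0::'a) ^ j) = of_nat (stirling (Suc n) 1)"
    by (simp add: sum.atMost_shift del: stirling.simps)
  then show ?thesis
    using True
    by (simp add: stirling_Suc_n_1 fact_prod_Suc pochhammer_prod add.commute del: stirling.simps)
next
  case False
  have "z * pochhammer (z + 1) n = pochhammer z (Suc n)"
    by (simp add: pochhammer_rec)
  also have "\<dots> = (\<Sum>k\<le>Suc n. of_nat (stirling (Suc n) k) * z ^ k)"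
    by (rule stirling_pochhammer[symmetric])
  also have "\<dots> = z * (\<Sum>j\<le>n. of_nat (stirling (Suc n) (Suc j)) * z ^ j)"
    by (subst sum.atMost_Suc_shift) (simp add: sum_distrib_left mult_ac del: stirling.simps)
  finally show ?thesis using False by simp
qed

lemma has_contour_integral_sum_power_div_power_circlepath:
  assumes "0 < R" "i \<le> n"
  shows "((\<lambda>z::complex. (\<Sum>j\<le>n. a j * z ^ j) / z ^ Suc i) has_contour_integral
           2 * pi * \<i> * a i) (circlepath 0 R)"
proof -
  have "((\<lambda>z. \<Sum>j\<le>n. a j * (z ^ j / z ^ Suc i)) has_contour_integral
          (\<Sum>j\<le>n. a j * (if j = i then 2 * pi * \<i> else 0))) (circlepath 0 R)"
    by (intro has_contour_integral_sum has_contour_integral_lmul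
          has_contour_integral_power_div_power_circlepath assms) auto
  moreover have "(\<Sum>j\<le>n. a j * (if j = i then 2 * pi * \<i> else 0)) = 2 * pi * \<i> * a i"
    using assms(2) by (simp add: if_distrib cong: if_cong)
  ultimately show ?thesis by (simp only: sum_divide_distrib times_divide_eq_right)
qed

lemma has_contour_integral_polynomial_div_power_diff_circlepath:
  fixes t :: complex
  assumes "0 < R" "R < norm t" "m \<le> Suc n"
  shows "((\<lambda>z. (\<Sum>j\<le>n. a j * z ^ j) / z ^ m * (1 / (t - z))) has_contour_integral
           2 * pi * \<i> * (\<Sum>i<m. a i * t ^ i) / t ^ m) (circlepath 0 R)"
proof -
  define f where "f z = (\<Sum>j\<le>n. a j * z ^ j)" for z
  have regular: "((\<lambda>z. f z / (t - z)) has_contour_integral 0) (circlepath 0 R)"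
    by (rule Cauchy_theorem_disc_simple[of _ 0 "norm t"])
       (use assms in \<open>auto simp: f_def intro!: holomorphic_intros\<close>)
  have principal: "((\<lambda>z. \<Sum>i<m. t ^ i * (f z / z ^ Suc i)) has_contour_integral
                     (\<Sum>i<m. t ^ i * (2 * pi * \<i> * a i))) (circlepath 0 R)"
    unfolding f_def using assms
    by (intro has_contour_integral_sum has_contour_integral_lmul
          has_contour_integral_sum_power_div_power_circlepath) auto
  have "0 + (\<Sum>i<m. t ^ i * (2 * pi * \<i> * a i)) = 2 * pi * \<i> * (\<Sum>i<m. a i * t ^ i)"
    by (simp add: sum_distrib_left mult_ac)
  then have "((\<lambda>z. (f z / (t - z) + (\<Sum>i<m. t ^ i * (f z / z ^ Suc i))) / t ^ m)
               has_contour_integral 2 * pi * \<i> * (\<Sum>i<m. a i * t ^ i) / t ^ m) (circlepath 0 R)"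
    using has_contour_integral_add[OF regular principal] by (simp only: has_contour_integral_div)
  then show ?thesis
  proof (rule has_contour_integral_eq)
    fix z assume "z \<in> path_image (circlepath 0 R)"
    then have "z \<noteq> 0" "t \<noteq> z" "t \<noteq> 0" using assms by auto
    then have "f z / z ^ m * (1 / (t - z)) = f z * (t ^ m / (z ^ m * (t - z))) / t ^ m"
      by (simp add: field_simps)
    also have "\<dots> = (f z / (t - z) + (\<Sum>i<m. t ^ i * (f z / z ^ Suc i))) / t ^ m"
      unfolding divide_power_mult_diff_eq[OF \<open>z \<noteq> 0\<close> \<open>t \<noteq> z\<close>]
      by (simp add: distrib_left sum_distrib_left mult_ac)
    finally show "(f z / (t - z) + (\<Sum>i<m. t ^ i * (f z / z ^ Suc i))) / t ^ m =
                  (\<Sum>j\<le>n. a j * z ^ j) / z ^ m * (1 / (t - z))"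
      by (simp add: f_def)
  qed
qed

lemma T'_eq_sum_stirling: "T' n m \<theta> = (\<Sum>k<m. real (stirling n k) * \<theta> ^ k) / pochhammer \<theta> n"
proof -
  have "(-1) ^ (n - k) * stirling1_signed n k = real (stirling n k)" for k
    by (simp add: stirling1_signed_def mult.assoc[symmetric] flip: power_add)
  then show ?thesis by (simp add: T'_def atLeast0LessThan)
qed

lemma T'_Suc_Suc_eq_sum_stirling:
  assumes "\<theta> \<noteq> 0"
  shows "T' (Suc n) (Suc m) \<theta> =
           (\<Sum>i<m. real (stirling (Suc n) (Suc i)) * \<theta> ^ i) / pochhammer (\<theta> + 1) n"
proof -
  have "(\<Sum>k<Suc m. real (stirling (Suc n) k) * \<theta> ^ k) =
          \<theta> * (\<Sum>i<m. real (stirling (Suc n) (Suc i)) * \<theta> ^ i)"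
    by (subst sum.lessThan_Suc_shift) (simp add: sum_distrib_left mult_ac del: stirling.simps)
  then show ?thesis
    using assms by (simp add: T'_eq_sum_stirling pochhammer_rec del: stirling.simps)
qed

theorem corollary1:
  fixes n m :: nat and \<theta> R :: real
  assumes "n \<ge> 1" and "m \<le> n" and "\<theta> > 0" and "0 < R" and "R < \<theta>"
  shows "complex_of_real (T' (n + 1) (m + 1) \<theta>) =
    complex_of_real (\<theta> ^ m / pochhammer (\<theta> + 1) n) *
    (1 / (2 * pi * \<i>)) *
    contour_integral (circlepath 0 R)
      (\<lambda>z. pochhammer (z + 1) n / z ^ m * (1 / (complex_of_real \<theta> - z)))"
proof -
  define A where "A = (\<Sum>i<m. real (stirling (Suc n) (Suc i)) * \<theta> ^ i)"
  have "((\<lambda>z. pochhammer (z + 1) n / z ^ m * (1 / (complex_of_real \<theta> - z))) has_contour_integral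
          2 * pi * \<i> * A / \<theta> ^ m) (circlepath 0 R)"
    using has_contour_integral_polynomial_div_power_diff_circlepath
            [of R "complex_of_real \<theta>" m n "\<lambda>j. of_nat (stirling (Suc n) (Suc j))"] assms
    by (simp add: pochhammer_plus_1_eq_sum_stirling A_def del: stirling.simps)
  then have integral: "contour_integral (circlepath 0 R)
      (\<lambda>z. pochhammer (z + 1) n / z ^ m * (1 / (complex_of_real \<theta> - z))) = 2 * pi * \<i> * A / \<theta> ^ m"
    by (rule contour_integral_unique)
  have T': "T' (n + 1) (m + 1) \<theta> = A / pochhammer (\<theta> + 1) n"
    using assms by (simp add: T'_Suc_Suc_eq_sum_stirling A_def del: stirling.simps)
  have "pochhammer (\<theta> + 1) n > 0"
    using assms by (intro pochhammer_pos) simp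
  then show ?thesis
    unfolding integral T' using assms by (simp add: field_simps)
qed

end
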